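(* Let $p$ be the characteristic of $\mathbb{F}_q$, $t\ge1$, $m=p^t$, and let $v_1,v_2\in\mathcal{R}=\mathbb{F}_q[x]/(x^{p^t}-1)$ with $\gcd(v_1v_2-1,x^{p^t}-1)=1$. Let $r_1,r_2$ be integers with $0<r_1<r_2<\frac{p^t-1}{2}$, and let $\mathcal{C}$ be the QC code of length $2p^t$ generated by $((x-1)^{r_1},v_1(x-1)^{r_1})$ and $(v_2(x-1)^{r_2},(x-1)^{r_2})$. Then $\mathcal{C}^{\perp_E}$ is the QC code generated by $((x-1)^{p^t-r_1},-\overline{v_2}(x-1)^{p^t-r_1})$ and $(-\overline{v_1}(x-1)^{p^t-r_2},(x-1)^{p^t-r_2})$, and $\mathcal{C}^{\perp_E}\subseteq\mathcal{C}$.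
   Context: Elements of $\mathcal{R}$ are identified with representatives of degree $<m$; $[k]=(k_0,\dots,k_{m-1})$; $\overline{k}(x)=k(x^{-1})\bmod(x^m-1)$. The QC code generated by $(u_{i1},u_{i2})$, $i=1,2$, is $\{([r_1u_{11}+r_2u_{21}],[r_1u_{12}+r_2u_{22}]):r_i\in\mathcal{R}\}\subseteq\mathbb{F}_q^{2m}$. $\mathcal{C}^{\perp_E}$ is the dual with respect to $\langle u,v\rangle_E=\sum u_iv_i$. *)

theory Defs
  imports "HOL-Computational_Algebra.Computational_Algebra"
begin

definition xm1 :: "nat \<Rightarrow> 'a::field poly" where
  "xm1 m = monom 1 m - 1"

definition cvec :: "nat \<Rightarrow> 'a::field poly \<Rightarrow> 'a list" where
  "cvec m k = map (\<lambda>i. coeff (k mod xm1 m) i) [0..<m]"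

text \<open>conjugate: k(x^{-1}) mod (x^m - 1), using x^{-1} = x^{m-1} in R.\<close>
definition pconj :: "nat \<Rightarrow> 'a::field poly \<Rightarrow> 'a poly" where
  "pconj m k = (\<Sum>i<m. monom (coeff (k mod xm1 m) i) ((m - i) mod m)) mod xm1 m"

definition qc_code :: "nat \<Rightarrow> 'a::field poly \<Rightarrow> 'a poly \<Rightarrow> 'a poly \<Rightarrow> 'a poly \<Rightarrow> 'a list set" where
  "qc_code m u11 u12 u21 u22 =
     {cvec m (r1 * u11 + r2 * u21) @ cvec m (r1 * u12 + r2 * u22) | r1 r2. True}"

definition euclid_ip :: "'a::field list \<Rightarrow> 'a list \<Rightarrow> 'a" where
  "euclid_ip u v = (\<Sum>i<length u. u ! i * v ! i)"

definition euclid_dual :: "nat \<Rightarrow> 'a::field list set \<Rightarrow> 'a list set" where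
  "euclid_dual n C = {v. length v = n \<and> (\<forall>c\<in>C. euclid_ip c v = 0)}"

end

theory Submission
  imports Defs "HOL-Number_Theory.Cong"
begin

text \<open>Work in \<open>R = F[x]/(x\<^sup>m - 1)\<close> and write \<open>b\<^sup>*\<close> for \<open>b(x\<^sup>-\<^sup>1)\<close>. The Euclidean inner
  product of the coefficient vectors of \<open>a\<close> and \<open>b\<close> is the constant coefficient of \<open>a b\<^sup>*\<close>
  in \<open>R\<close>, and this pairing is nondegenerate. Hence \<open>(b\<^sub>1, b\<^sub>2)\<close> is orthogonal to the code
  iff \<open>g\<^sub>1 (b\<^sub>1\<^sup>* + v\<^sub>1 b\<^sub>2\<^sup>*)\<close> and \<open>g\<^sub>2 (v\<^sub>2 b\<^sub>1\<^sup>* + b\<^sub>2\<^sup>*)\<close> vanish in \<open>R\<close>, where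
  \<open>g\<^sub>i = (x - 1)\<^bsup>r\<^sub>i\<^esup>\<close>. In characteristic \<open>p\<close> we have \<open>x\<^sup>m - 1 = (x - 1)\<^sup>m\<close>, so this means that
  \<open>h\<^sub>i = (x - 1)\<^bsup>m - r\<^sub>i\<^esup>\<close> divides the two combinations; inverting \<open>1 - v\<^sub>1 v\<^sub>2\<close> solves for
  \<open>b\<^sub>1\<^sup>*, b\<^sub>2\<^sup>*\<close>, and conjugating back expresses \<open>(b\<^sub>1, b\<^sub>2)\<close> in the stated generators, because
  \<open>h\<^sub>i\<^sup>*\<close> is a unit multiple of \<open>h\<^sub>i\<close>. The same two facts show that those generators are
  orthogonal to the code. Finally \<open>2 r\<^sub>2 < m\<close> makes every generator of the dual a multiple of
  \<open>g\<^sub>2\<close>, and such pairs lie in the code since \<open>1 - v\<^sub>1 v\<^sub>2\<close> is a unit.\<close>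

section \<open>Arithmetic modulo \<open>m\<close>\<close>

lemma pred_square_mod: "m > 0 \<Longrightarrow> (m - 1) * (m - 1) mod m = 1 mod (m :: nat)"
proof (cases "m \<le> 1")
  case False
  define k where "k = m - 2"
  have "m = k + 2"
    using False by (simp add: k_def)
  then have "(m - 1) * (m - 1) = 1 + k * m"
    by (simp add: algebra_simps)
  then show ?thesis
    by (simp only: mod_mult_self1)
qed (auto simp: le_Suc_eq)

lemma mult_pred_mod:
  assumes "i \<le> m"
  shows "i * (m - 1) mod m = (m - i) mod (m :: nat)"
proof (cases i)
  case (Suc j)
  then have "i * (m - 1) = (m - i) + j * m"
    using assms by (simp add: algebra_simps diff_mult_distrib2)
  then show ?thesis
    by simp
qed simp

lemma add_mult_pred_mod_eq_0_iff:
  assumes "m > 0"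
  shows "(i + j * (m - 1)) mod m = 0 \<longleftrightarrow> i mod m = j mod (m :: nat)"
proof -
  obtain k where "m = Suc k"
    using assms gr0_implies_Suc by blast
  then have "int (i + j * (m - 1)) = (int i - int j) + int j * int m"
    by (simp add: algebra_simps)
  then have "(i + j * (m - 1)) mod m = 0 \<longleftrightarrow> int m dvd int i - int j"
    by (metis dvd_add_left_iff dvd_eq_mod_eq_0 dvd_triv_right int_dvd_int_iff)
  also have "\<dots> \<longleftrightarrow> i mod m = j mod m"
    by (metis mod_eq_dvd_iff of_nat_eq_iff of_nat_mod)
  finally show ?thesis .
qed

section \<open>Reduction modulo \<open>x\<^sup>m - 1\<close>\<close>

lemma degree_xm1: "m > 0 \<Longrightarrow> degree (xm1 m :: 'a::field poly) = m"
proof -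
  assume "m > 0"
  then have "degree (monom 1 m + - 1 :: 'a poly) = m"
    by (subst degree_add_eq_left) (simp_all add: degree_monom_eq)
  then show ?thesis
    by (simp add: xm1_def)
qed

lemma xm1_neq_0: "m > 0 \<Longrightarrow> xm1 m \<noteq> (0 :: 'a::field poly)"
  using degree_xm1[of m, where 'a = 'a] by auto

lemma mod_xm1_eq_self:
  assumes "degree (a :: 'a::field poly) < m"
  shows "a mod xm1 m = a"
proof (rule mod_poly_less)
  have "m > 0"
    using assms by simp
  then show "degree a < degree (xm1 m :: 'a poly)"
    using assms by (simp add: degree_xm1)
qed

lemma degree_mod_xm1_less: "m > 0 \<Longrightarrow> degree (a mod xm1 m :: 'a::field poly) < m"
  by (metis degree_0 degree_mod_less degree_xm1 xm1_neq_0)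

lemma monom_mod_xm1: "m > 0 \<Longrightarrow> monom c n mod xm1 m = monom (c :: 'a::field) (n mod m)"
proof -
  assume m: "m > 0"
  have "[monom 1 m = (1 :: 'a poly)] (mod xm1 m)"
    by (simp add: xm1_def cong_iff_dvd_diff)
  then have "[monom c (n mod m) * monom 1 m ^ (n div m) = monom c (n mod m) * 1 ^ (n div m)] (mod xm1 m)"
    by (intro cong_mult cong_pow cong_refl)
  moreover have "monom c n = monom c (n mod m) * monom 1 m ^ (n div m)"
    by (simp add: mult_monom monom_power)
  moreover have "degree (monom c (n mod m)) < m"
    using m by (meson degree_monom_le le_less_trans mod_less_divisor)
  ultimately show ?thesis
    by (simp add: cong_def mod_xm1_eq_self)
qed

lemma x_minus_1_power_CHAR_power:
  assumes "prime CHAR('a::field)"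
  shows "[:-1, 1:] ^ (CHAR('a) ^ t) = (xm1 (CHAR('a) ^ t) :: 'a poly)"
proof -
  let ?m = "CHAR('a) ^ t"
  have dream: "(x + y :: 'a poly) ^ ?m = x ^ ?m + y ^ ?m" for x y
    by (rule freshmans_dream') (simp_all add: assms)
  have minus_one: "(-1 :: 'a poly) ^ ?m = -1"
    using dream[of 1 "-1"] prime_gt_0_nat[OF assms] by (simp add: power_0_left eq_neg_iff_add_eq_0 add.commute)
  have "[:-1, 1:] = (monom 1 1 + -1 :: 'a poly)"
    by (simp add: monom_Suc one_pCons)
  then have "[:-1, 1:] ^ ?m = monom 1 1 ^ ?m + (-1 :: 'a poly) ^ ?m"
    by (simp only: dream)
  also have "\<dots> = monom 1 ?m - 1"
    by (simp add: minus_one monom_power)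
  finally show ?thesis
    unfolding xm1_def .
qed

lemma cong_inverse_of_gcd_mod_eq_1:
  fixes a d :: "'a::field_gcd poly"
  assumes "d \<noteq> 0" and "gcd (a mod d) d = 1"
  obtains u where "[u * a = 1] (mod d)"
proof
  let ?x = "fst (bezout_coefficients a d)" and ?y = "snd (bezout_coefficients a d)"
  have "?x * a + ?y * d = 1"
    using bezout_coefficients_fst_snd[of a d] assms gcd_mod_left[of d a] by simp
  then show "[?x * a = 1] (mod d)"
    by (metis cong_iff_lin mult.commute)
qed

section \<open>Conjugation\<close>

lemma pcompose_monom: "pcompose (monom c n) q = smult c (q ^ n)"
  by (induction n) (simp_all add: monom_Suc monom_0 pcompose_pCons)

lemma cong_pcompose_right:
  "[q = q'] (mod d) \<Longrightarrow> [pcompose p q = pcompose p q'] (mod (d :: 'a::field poly))"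
  by (induction p) (simp_all add: pcompose_pCons cong_add cong_mult)

text \<open>Substituting \<open>x\<^sup>m\<^sup>-\<^sup>1\<close>, the inverse of \<open>x\<close> modulo \<open>x\<^sup>m - 1\<close>, lifts the
  conjugation \<^const>\<open>pconj\<close> to a ring endomorphism of the polynomial ring.\<close>

definition subst_xinv :: "nat \<Rightarrow> 'a::comm_ring_1 poly \<Rightarrow> 'a poly" where
  "subst_xinv m b = pcompose b (monom 1 (m - 1))"

lemma subst_xinv_add [simp]: "subst_xinv m (a + b) = subst_xinv m a + subst_xinv m b"
  by (simp add: subst_xinv_def pcompose_add)

lemma subst_xinv_diff [simp]: "subst_xinv m (a - b) = subst_xinv m a - subst_xinv m b"
  by (simp add: subst_xinv_def pcompose_diff)

lemma subst_xinv_minus [simp]: "subst_xinv m (- a) = - subst_xinv m a"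
  by (simp add: subst_xinv_def pcompose_uminus)

lemma subst_xinv_mult [simp]: "subst_xinv m (a * b) = subst_xinv m a * subst_xinv m b"
  by (simp add: subst_xinv_def pcompose_mult)

lemma subst_xinv_one [simp]: "subst_xinv m 1 = 1"
  by (simp add: subst_xinv_def pcompose_1)

lemma subst_xinv_power [simp]: "subst_xinv m (a ^ n) = subst_xinv m a ^ n"
  by (induction n) simp_all

lemma subst_xinv_sum: "subst_xinv m (sum f A) = (\<Sum>i\<in>A. subst_xinv m (f i))"
  by (simp add: subst_xinv_def pcompose_sum)

lemma subst_xinv_monom: "subst_xinv m (monom c n) = monom c (n * (m - 1))"
  by (simp add: subst_xinv_def pcompose_monom monom_power smult_monom mult.commute)

lemma xm1_dvd_subst_xinv_xm1: "xm1 m dvd subst_xinv m (xm1 m :: 'a::field poly)"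
proof -
  have "subst_xinv m (xm1 m) = (monom 1 m :: 'a poly) ^ (m - 1) - 1"
    by (simp add: xm1_def subst_xinv_monom monom_power mult.commute)
  also have "\<dots> = xm1 m * (\<Sum>i<m - 1. monom 1 m ^ i)"
    by (simp only: power_diff_1_eq xm1_def)
  finally show ?thesis
    by (rule dvdI)
qed

lemma cong_subst_xinv:
  assumes "[a = b] (mod xm1 m :: 'a::field poly)"
  shows "[subst_xinv m a = subst_xinv m b] (mod xm1 m)"
proof -
  have "xm1 m dvd a - b"
    using assms by (simp add: cong_iff_dvd_diff)
  then obtain k where "a - b = xm1 m * k" ..
  then have "subst_xinv m a - subst_xinv m b = subst_xinv m (xm1 m) * subst_xinv m k"
    by (simp only: subst_xinv_diff [symmetric] subst_xinv_mult [symmetric])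
  moreover have "xm1 m dvd subst_xinv m (xm1 m) * subst_xinv m k"
    by (rule dvd_mult2) (rule xm1_dvd_subst_xinv_xm1)
  ultimately show ?thesis
    by (simp add: cong_iff_dvd_diff)
qed

lemma subst_xinv_subst_xinv:
  assumes "m > 0"
  shows "[subst_xinv m (subst_xinv m a) = a] (mod xm1 m :: 'a::field poly)"
proof -
  have "monom 1 ((m - 1) * (m - 1)) mod xm1 m = (monom 1 (1 mod m) :: 'a poly)"
    using assms by (simp only: monom_mod_xm1 pred_square_mod)
  also have "\<dots> = monom 1 1 mod xm1 m"
    using assms by (simp only: monom_mod_xm1)
  finally have "[monom 1 ((m - 1) * (m - 1)) = (monom 1 1 :: 'a poly)] (mod xm1 m)"
    unfolding cong_def .
  then have "[pcompose a (monom 1 ((m - 1) * (m - 1))) = pcompose a (monom 1 1)] (mod xm1 m)"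
    by (rule cong_pcompose_right)
  moreover have "pcompose (monom 1 (m - 1)) (monom 1 (m - 1)) = (monom 1 ((m - 1) * (m - 1)) :: 'a poly)"
    by (simp add: pcompose_monom monom_power)
  moreover have "monom 1 1 = ([:0, 1:] :: 'a poly)"
    by (simp add: monom_Suc)
  ultimately show ?thesis
    by (simp only: subst_xinv_def pcompose_assoc [symmetric] pcompose_idR)
qed

lemma pconj_cong_subst_xinv:
  assumes "m > 0"
  shows "[pconj m k = subst_xinv m k] (mod xm1 m :: 'a::field poly)"
proof -
  define k' where "k' = k mod xm1 m"
  have "[pconj m k = (\<Sum>i<m. monom (coeff k' i) ((m - i) mod m))] (mod xm1 m)"
    by (simp only: pconj_def k'_def cong_def mod_mod_trivial)
  also have "[(\<Sum>i<m. monom (coeff k' i) ((m - i) mod m)) = (\<Sum>i<m. monom (coeff k' i) (i * (m - 1)))] (mod xm1 m)"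
  proof (rule cong_sum)
    fix i assume "i \<in> {..<m}"
    then have "i * (m - 1) mod m = (m - i) mod m"
      by (intro mult_pred_mod) simp
    then show "[monom (coeff k' i) ((m - i) mod m) = monom (coeff k' i) (i * (m - 1))] (mod xm1 m)"
      by (simp only: cong_def monom_mod_xm1[OF assms] mod_mod_trivial)
  qed
  also have "[(\<Sum>i<m. monom (coeff k' i) (i * (m - 1))) = subst_xinv m k'] (mod xm1 m)"
  proof -
    have "{..<m} = {..m - 1}"
      using assms by auto
    moreover have "degree k' \<le> m - 1"
      using degree_mod_xm1_less[OF assms, of k] unfolding k'_def by linarith
    ultimately have "(\<Sum>i<m. monom (coeff k' i) i) = k'"
      by (simp only: poly_as_sum_of_monoms')
    moreover have "subst_xinv m (\<Sum>i<m. monom (coeff k' i) i) = (\<Sum>i<m. monom (coeff k' i) (i * (m - 1)))"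
      by (simp only: subst_xinv_sum subst_xinv_monom)
    ultimately show ?thesis
      by (simp only: cong_refl)
  qed
  also have "[subst_xinv m k' = subst_xinv m k] (mod xm1 m)"
    by (rule cong_subst_xinv) (simp only: k'_def cong_def mod_mod_trivial)
  finally show ?thesis .
qed

lemma subst_xinv_x_minus_1_power:
  assumes "m > 0"
  shows "[subst_xinv m ([:-1, 1:] ^ n) = (- monom 1 (m - 1)) ^ n * [:-1, 1:] ^ n] (mod xm1 m :: 'a::field poly)"
proof -
  have lin: "[:-1, 1:] = (monom 1 1 - 1 :: 'a poly)"
    by (simp add: monom_Suc one_pCons)
  have "subst_xinv m [:-1, 1:] = (monom 1 (m - 1) - 1 :: 'a poly)"
    unfolding lin by (simp add: subst_xinv_monom)
  also have "\<dots> = - monom 1 (m - 1) * (monom 1 1 - 1) + (monom 1 (m - 1) * monom 1 1 - 1)"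
    by (simp add: algebra_simps)
  also have "\<dots> = - monom 1 (m - 1) * [:-1, 1:] + xm1 m"
    using assms by (simp add: lin xm1_def mult_monom)
  finally have "[subst_xinv m [:-1, 1:] = - monom 1 (m - 1) * ([:-1, 1:] :: 'a poly)] (mod xm1 m)"
    by (simp only: cong_def mod_add_self2)
  then have "[subst_xinv m [:-1, 1:] ^ n = (- monom 1 (m - 1) * ([:-1, 1:] :: 'a poly)) ^ n] (mod xm1 m)"
    by (rule cong_pow)
  then show ?thesis
    by (simp only: subst_xinv_power power_mult_distrib)
qed

lemma subst_xinv_combination_cong:
  assumes "[subst_xinv m h = k * h] (mod xm1 m)" and "[subst_xinv m h' = k' * h'] (mod xm1 m)"
    and "[subst_xinv m v = w] (mod xm1 m :: 'a::field poly)"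
  shows "[subst_xinv m (u * (h * a - v * (h' * b)))
    = (subst_xinv m u * k * subst_xinv m a) * h + (subst_xinv m u * k' * subst_xinv m b) * (- w * h')] (mod xm1 m)"
proof -
  have "[subst_xinv m (u * (h * a - v * (h' * b)))
      = subst_xinv m u * (k * h * subst_xinv m a - w * (k' * h' * subst_xinv m b))] (mod xm1 m)"
    unfolding subst_xinv_mult subst_xinv_diff by (intro cong_mult cong_diff cong_refl assms)
  moreover have "subst_xinv m u * (k * h * subst_xinv m a - w * (k' * h' * subst_xinv m b))
      = (subst_xinv m u * k * subst_xinv m a) * h + (subst_xinv m u * k' * subst_xinv m b) * (- w * h')"
    by algebra
  ultimately show ?thesis
    by (simp only:)
qed

lemma xm1_dvd_mult_subst_xinv:
  assumes "g * h = xm1 m" and "[subst_xinv m h = k * h] (mod xm1 m :: 'a::field poly)"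
  shows "xm1 m dvd g * subst_xinv m h"
proof -
  have "[g * subst_xinv m h = k * (g * h)] (mod xm1 m)"
    using cong_mult[OF cong_refl[of g] assms(2)] by (simp add: ac_simps)
  then show ?thesis
    by (simp add: assms(1) cong_def dvd_eq_mod_eq_0)
qed

section \<open>The inner product inside \<open>F[x]/(x\<^sup>m - 1)\<close>\<close>

lemma euclid_ip_append:
  assumes "length u1 = length v1"
  shows "euclid_ip (u1 @ u2) (v1 @ v2) = euclid_ip u1 v1 + euclid_ip u2 v2"
proof -
  have "(\<Sum>i<a + b. f i) = (\<Sum>i<a. f i) + (\<Sum>i<b. f (i + a))" for f :: "nat \<Rightarrow> 'a" and a b
    using sum.atLeastLessThan_concat[of 0 a "a + b" f] sum.shift_bounds_nat_ivl[of f 0 a b]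
    by (simp add: atLeast0LessThan add.commute)
  then show ?thesis
    using assms by (simp add: euclid_ip_def nth_append)
qed

lemma biadditive_poly_eqI:
  fixes F G :: "'a::comm_semiring_0 poly \<Rightarrow> 'a poly \<Rightarrow> 'b::ab_group_add"
  assumes "\<And>a a' b. F (a + a') b = F a b + F a' b" "\<And>a b b'. F a (b + b') = F a b + F a b'"
    and "\<And>a a' b. G (a + a') b = G a b + G a' b" "\<And>a b b'. G a (b + b') = G a b + G a b'"
    and "\<And>c i d j. F (monom c i) (monom d j) = G (monom c i) (monom d j)"
  shows "F a b = G a b"
proof -
  have expand: "H a b = (\<Sum>i\<le>degree a. \<Sum>j\<le>degree b. H (monom (coeff a i) i) (monom (coeff b j) j))"
    if "\<And>a a' b. H (a + a') b = H a b + H a' b" "\<And>a b b'. H a (b + b') = H a b + H a b'"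
    for H :: "'a poly \<Rightarrow> 'a poly \<Rightarrow> 'b"
  proof -
    have "H 0 b = 0" "H a 0 = 0" for a b
      using that(1)[of 0 0 b] that(2)[of a 0 0] by simp_all
    then have "H (sum f A) y = (\<Sum>i\<in>A. H (f i) y)" "H x (sum f A) = (\<Sum>i\<in>A. H x (f i))"
      for f :: "nat \<Rightarrow> 'a poly" and A x y
      using that sum_comp_morphism[of "\<lambda>x. H x y" f A] sum_comp_morphism[of "H x" f A]
      by (simp_all add: comp_def)
    then have "H (\<Sum>i\<le>degree a. monom (coeff a i) i) (\<Sum>j\<le>degree b. monom (coeff b j) j)
        = (\<Sum>i\<le>degree a. \<Sum>j\<le>degree b. H (monom (coeff a i) i) (monom (coeff b j) j))"
      by (simp only:) (rule sum.swap)
    then show ?thesis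
      by (simp only: poly_as_sum_of_monoms)
  qed
  have "F a b = (\<Sum>i\<le>degree a. \<Sum>j\<le>degree b. F (monom (coeff a i) i) (monom (coeff b j) j))"
    by (rule expand) (fact assms)+
  also have "\<dots> = (\<Sum>i\<le>degree a. \<Sum>j\<le>degree b. G (monom (coeff a i) i) (monom (coeff b j) j))"
    by (simp only: assms(5))
  also have "\<dots> = G a b"
    by (rule expand[symmetric]) (fact assms)+
  finally show ?thesis .
qed

lemma length_cvec [simp]: "length (cvec m a) = m"
  by (simp add: cvec_def)

lemma euclid_ip_cvec_eq_sum:
  "euclid_ip (cvec m a) (cvec m b) = (\<Sum>i<m. coeff (a mod xm1 m) i * coeff (b mod xm1 m) i)"
  by (simp add: euclid_ip_def cvec_def)

lemma euclid_ip_cvec: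
  assumes "m > 0"
  shows "euclid_ip (cvec m a) (cvec m b) = coeff (a * subst_xinv m b mod xm1 m) 0"
proof (rule biadditive_poly_eqI[where F = "\<lambda>a b. euclid_ip (cvec m a) (cvec m b)"])
  fix c d :: 'a and i j
  have "euclid_ip (cvec m (monom c i)) (cvec m (monom d j))
      = (\<Sum>k<m. if k = i mod m then (if i mod m = j mod m then c * d else 0) else 0)"
    unfolding euclid_ip_cvec_eq_sum monom_mod_xm1[OF assms] by (rule sum.cong) auto
  also have "\<dots> = (if i mod m = j mod m then c * d else 0)"
    using assms by simp
  also have "\<dots> = coeff (monom c i * subst_xinv m (monom d j) mod xm1 m) 0"
    using assms add_mult_pred_mod_eq_0_iff[OF assms, of i j]
    by (simp add: subst_xinv_monom mult_monom monom_mod_xm1)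
  finally show "euclid_ip (cvec m (monom c i)) (cvec m (monom d j))
      = coeff (monom c i * subst_xinv m (monom d j) mod xm1 m) 0" .
qed (simp_all add: euclid_ip_cvec_eq_sum poly_mod_add_left algebra_simps sum.distrib)

lemma euclid_ip_cvec_append:
  assumes "m > 0"
  shows "euclid_ip (cvec m a1 @ cvec m a2) (cvec m b1 @ cvec m b2)
    = coeff ((a1 * subst_xinv m b1 + a2 * subst_xinv m b2) mod xm1 m) 0"
  by (simp add: euclid_ip_append euclid_ip_cvec[OF assms] poly_mod_add_left)

lemma xm1_dvd_of_coeff_0_mult:
  assumes "m > 0" and "\<And>s. coeff (s * P mod xm1 m) 0 = 0"
  shows "xm1 m dvd (P :: 'a::field poly)"
proof -
  have "coeff (P mod xm1 m) i = 0" for i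
  proof (cases "i < m")
    case True
    have "coeff (P mod xm1 m) i = (\<Sum>k<m. if k = i then coeff (P mod xm1 m) k else 0)"
      using True by simp
    also have "\<dots> = euclid_ip (cvec m P) (cvec m (monom 1 i))"
      unfolding euclid_ip_cvec_eq_sum monom_mod_xm1[OF assms(1)]
      using True by (intro sum.cong) auto
    also have "\<dots> = coeff (subst_xinv m (monom 1 i) * P mod xm1 m) 0"
      by (simp add: euclid_ip_cvec[OF assms(1)] mult.commute)
    finally show ?thesis
      using assms(2) by simp
  next
    case False
    then show ?thesis
      using degree_mod_xm1_less[OF assms(1), of P] by (simp add: coeff_eq_0)
  qed
  then show ?thesis
    by (simp add: mod_eq_0_iff_dvd [symmetric] poly_eq_iff)
qed

section \<open>Duals of quasi-cyclic codes of index 2\<close>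

lemma cvec_cong: "[a = b] (mod xm1 m) \<Longrightarrow> cvec m a = cvec m b"
  by (simp add: cvec_def cong_def)

lemma cvec_Poly:
  assumes "m > 0" and "length xs = m"
  shows "cvec m (Poly xs) = (xs :: 'a::field list)"
proof -
  have "degree (Poly xs) \<le> m - 1"
    using assms(2) by (intro degree_le) (simp add: nth_default_beyond)
  then have "Poly xs mod xm1 m = Poly xs"
    using assms(1) by (intro mod_xm1_eq_self) linarith
  then show ?thesis
    using assms(2) by (auto simp: cvec_def nth_default_nth intro: nth_equalityI)
qed

lemma cvec_append_cases:
  assumes "m > 0" and "length v = 2 * m"
  obtains b1 b2 :: "'a::field poly" where "v = cvec m b1 @ cvec m b2"
proof
  show "v = cvec m (Poly (take m v)) @ cvec m (Poly (drop m v))"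
    using assms by (simp add: cvec_Poly)
qed

lemma mem_qc_codeI:
  assumes "[a = r1 * u11 + r2 * u21] (mod xm1 m)" and "[b = r1 * u12 + r2 * u22] (mod xm1 m)"
  shows "cvec m a @ cvec m b \<in> qc_code m u11 u12 u21 u22"
  using cvec_cong[OF assms(1)] cvec_cong[OF assms(2)] unfolding qc_code_def by auto

lemma cvec_append_mem_qc_codeI:
  fixes g1 g2 v1 v2 u :: "'a::field poly"
  assumes "[u * (1 - v1 * v2) = 1] (mod xm1 m)"
    and "g1 dvd g2" and "g2 dvd d1" and "g2 dvd d2"
  shows "cvec m d1 @ cvec m d2 \<in> qc_code m g1 (v1 * g1) (v2 * g2) g2"
proof -
  obtain e where e: "g2 = g1 * e"
    using assms(2) ..
  obtain f1 f2 where f: "d1 = g2 * f1" "d2 = g2 * f2"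
    using assms(3,4) by (elim dvdE)
  define s1 where "s1 = u * (f1 - v2 * f2) * e"
  define s2 where "s2 = u * (f2 - v1 * f1)"
  have "s1 * g1 + s2 * (v2 * g2) = (u * (1 - v1 * v2)) * d1"
    "s1 * (v1 * g1) + s2 * g2 = (u * (1 - v1 * v2)) * d2"
    unfolding s1_def s2_def f e by algebra+
  moreover have "[(u * (1 - v1 * v2)) * d = d] (mod xm1 m)" for d
    using cong_mult[OF assms(1) cong_refl[of d]] by simp
  ultimately show ?thesis
    by (intro mem_qc_codeI[of _ s1 _ s2]) (simp_all add: cong_sym_eq)
qed

lemma qc_code_subset_euclid_dual:
  fixes g1 g2 h1 h2 v1 v2 w1 w2 :: "'a::field poly"
  assumes m: "m > 0"
    and gh: "xm1 m dvd g1 * subst_xinv m h1" "xm1 m dvd g2 * subst_xinv m h2"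
    and w: "[subst_xinv m w1 = v1] (mod xm1 m)" "[subst_xinv m w2 = v2] (mod xm1 m)"
  shows "qc_code m h1 (- w2 * h1) (- w1 * h2) h2
    \<subseteq> euclid_dual (2 * m) (qc_code m g1 (v1 * g1) (v2 * g2) g2)"
proof
  fix d assume "d \<in> qc_code m h1 (- w2 * h1) (- w1 * h2) h2"
  then obtain R1 R2 where d: "d = cvec m (R1 * h1 + R2 * (- w1 * h2)) @ cvec m (R1 * (- w2 * h1) + R2 * h2)"
    unfolding qc_code_def by blast
  have "euclid_ip c d = 0" if c_mem: "c \<in> qc_code m g1 (v1 * g1) (v2 * g2) g2" for c
  proof -
    obtain s1 s2 where c: "c = cvec m (s1 * g1 + s2 * (v2 * g2)) @ cvec m (s1 * (v1 * g1) + s2 * g2)"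
      using c_mem unfolding qc_code_def by blast
    let ?S1 = "subst_xinv m R1" and ?S2 = "subst_xinv m R2"
    let ?K1 = "subst_xinv m h1" and ?K2 = "subst_xinv m h2"
    let ?P1 = "subst_xinv m w1" and ?P2 = "subst_xinv m w2"
    have "(s1 * g1 + s2 * (v2 * g2)) * subst_xinv m (R1 * h1 + R2 * (- w1 * h2))
        + (s1 * (v1 * g1) + s2 * g2) * subst_xinv m (R1 * (- w2 * h1) + R2 * h2)
      = s1 * ?S1 * (g1 * ?K1) * (1 - v1 * ?P2) + s1 * ?S2 * g1 * ?K2 * (v1 - ?P1)
        + s2 * ?S1 * g2 * ?K1 * (v2 - ?P2) + s2 * ?S2 * (g2 * ?K2) * (1 - v2 * ?P1)"
      by (simp only: subst_xinv_add subst_xinv_mult subst_xinv_minus) algebra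
    moreover have "xm1 m dvd v1 - ?P1" "xm1 m dvd v2 - ?P2"
      using w[THEN cong_sym] by (simp_all add: cong_iff_dvd_diff)
    ultimately have "xm1 m dvd (s1 * g1 + s2 * (v2 * g2)) * subst_xinv m (R1 * h1 + R2 * (- w1 * h2))
        + (s1 * (v1 * g1) + s2 * g2) * subst_xinv m (R1 * (- w2 * h1) + R2 * h2)"
      using gh by simp
    then show ?thesis
      by (simp add: c d euclid_ip_cvec_append[OF m] dvd_eq_mod_eq_0)
  qed
  then show "d \<in> euclid_dual (2 * m) (qc_code m g1 (v1 * g1) (v2 * g2) g2)"
    using d by (simp add: euclid_dual_def)
qed

lemma xm1_dvd_of_mem_euclid_dual:
  fixes g1 g2 v1 v2 :: "'a::field poly"
  assumes m: "m > 0"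
    and v: "cvec m b1 @ cvec m b2 \<in> euclid_dual (2 * m) (qc_code m g1 (v1 * g1) (v2 * g2) g2)"
  shows "xm1 m dvd g1 * (subst_xinv m b1 + v1 * subst_xinv m b2)"
    and "xm1 m dvd g2 * (v2 * subst_xinv m b1 + subst_xinv m b2)"
proof -
  let ?B1 = "subst_xinv m b1" and ?B2 = "subst_xinv m b2"
  have "coeff ((s1 * (g1 * (?B1 + v1 * ?B2)) + s2 * (g2 * (v2 * ?B1 + ?B2))) mod xm1 m) 0 = 0" for s1 s2
  proof -
    have "cvec m (s1 * g1 + s2 * (v2 * g2)) @ cvec m (s1 * (v1 * g1) + s2 * g2)
        \<in> qc_code m g1 (v1 * g1) (v2 * g2) g2"
      unfolding qc_code_def by blast
    then have "euclid_ip (cvec m (s1 * g1 + s2 * (v2 * g2)) @ cvec m (s1 * (v1 * g1) + s2 * g2))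
        (cvec m b1 @ cvec m b2) = 0"
      using v by (simp add: euclid_dual_def)
    then have "coeff (((s1 * g1 + s2 * (v2 * g2)) * ?B1 + (s1 * (v1 * g1) + s2 * g2) * ?B2) mod xm1 m) 0 = 0"
      by (simp add: euclid_ip_cvec_append[OF m])
    moreover have "(s1 * g1 + s2 * (v2 * g2)) * ?B1 + (s1 * (v1 * g1) + s2 * g2) * ?B2
        = s1 * (g1 * (?B1 + v1 * ?B2)) + s2 * (g2 * (v2 * ?B1 + ?B2))"
      by algebra
    ultimately show ?thesis
      by simp
  qed
  from this[of _ 0] this[of 0] show "xm1 m dvd g1 * (?B1 + v1 * ?B2)" "xm1 m dvd g2 * (v2 * ?B1 + ?B2)"
    by (auto intro: xm1_dvd_of_coeff_0_mult[OF m])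
qed

lemma euclid_dual_subset_qc_code:
  fixes g1 g2 h1 h2 k1 k2 v1 v2 w1 w2 u :: "'a::field poly"
  assumes m: "m > 0"
    and gh: "g1 * h1 = xm1 m" "g2 * h2 = xm1 m"
    and k: "[subst_xinv m h1 = k1 * h1] (mod xm1 m)" "[subst_xinv m h2 = k2 * h2] (mod xm1 m)"
    and w: "[subst_xinv m v1 = w1] (mod xm1 m)" "[subst_xinv m v2 = w2] (mod xm1 m)"
    and u: "[u * (1 - v1 * v2) = 1] (mod xm1 m)"
  shows "euclid_dual (2 * m) (qc_code m g1 (v1 * g1) (v2 * g2) g2)
    \<subseteq> qc_code m h1 (- w2 * h1) (- w1 * h2) h2"
proof
  fix v assume v: "v \<in> euclid_dual (2 * m) (qc_code m g1 (v1 * g1) (v2 * g2) g2)"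
  then obtain b1 b2 :: "'a poly" where v_eq: "v = cvec m b1 @ cvec m b2"
    using cvec_append_cases[OF m] by (auto simp: euclid_dual_def)
  define B1 where "B1 = subst_xinv m b1"
  define B2 where "B2 = subst_xinv m b2"
  have "g1 \<noteq> 0" "g2 \<noteq> 0"
    using gh xm1_neq_0[OF m] by auto
  have "xm1 m dvd g1 * (B1 + v1 * B2)" "xm1 m dvd g2 * (v2 * B1 + B2)"
    using xm1_dvd_of_mem_euclid_dual[OF m v[unfolded v_eq]] by (simp_all add: B1_def B2_def)
  then have "g1 * h1 dvd g1 * (B1 + v1 * B2)" "g2 * h2 dvd g2 * (v2 * B1 + B2)"
    unfolding gh .
  then have "h1 dvd B1 + v1 * B2" "h2 dvd v2 * B1 + B2"
    using \<open>g1 \<noteq> 0\<close> \<open>g2 \<noteq> 0\<close> by simp_all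
  then obtain \<alpha> \<beta> where \<alpha>: "B1 + v1 * B2 = h1 * \<alpha>" and \<beta>: "v2 * B1 + B2 = h2 * \<beta>"
    by (elim dvdE)
  have unit: "[B = u * ((1 - v1 * v2) * B)] (mod xm1 m)" for B
    using cong_mult[OF u cong_refl[of B]] by (simp add: mult.assoc cong_sym_eq)
  have "h1 * \<alpha> - v1 * (h2 * \<beta>) = (1 - v1 * v2) * B1"
    "h2 * \<beta> - v2 * (h1 * \<alpha>) = (1 - v1 * v2) * B2"
    unfolding \<alpha>[symmetric] \<beta>[symmetric] by algebra+
  then have B_cong: "[B1 = u * (h1 * \<alpha> - v1 * (h2 * \<beta>))] (mod xm1 m)"
    "[B2 = u * (h2 * \<beta> - v2 * (h1 * \<alpha>))] (mod xm1 m)"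
    by (simp_all only: unit)
  have "[b1 = subst_xinv m B1] (mod xm1 m)" "[b2 = subst_xinv m B2] (mod xm1 m)"
    unfolding B1_def B2_def by (rule cong_sym, rule subst_xinv_subst_xinv[OF m])+
  then have "[b1 = subst_xinv m (u * (h1 * \<alpha> - v1 * (h2 * \<beta>)))] (mod xm1 m)"
    "[b2 = subst_xinv m (u * (h2 * \<beta> - v2 * (h1 * \<alpha>)))] (mod xm1 m)"
    using cong_subst_xinv[OF B_cong(1)] cong_subst_xinv[OF B_cong(2)] by (blast intro: cong_trans)+
  then show "v \<in> qc_code m h1 (- w2 * h1) (- w1 * h2) h2"
    unfolding v_eq using subst_xinv_combination_cong[OF k(1) k(2) w(1)] subst_xinv_combination_cong[OF k(2) k(1) w(2)]
    by (intro mem_qc_codeI) (auto simp: add.commute intro: cong_trans)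
qed

lemma qc_code_subset_qc_code:
  fixes g1 g2 h1 h2 v1 v2 w1 w2 u :: "'a::field poly"
  assumes "[u * (1 - v1 * v2) = 1] (mod xm1 m)"
    and "g1 dvd g2" and "g2 dvd h1" and "g2 dvd h2"
  shows "qc_code m h1 (- w2 * h1) (- w1 * h2) h2 \<subseteq> qc_code m g1 (v1 * g1) (v2 * g2) g2"
  unfolding qc_code_def [of m h1]
  using assms by (auto intro!: cvec_append_mem_qc_codeI[OF assms(1,2)])

lemma euclid_dual_qc_code:
  fixes g1 g2 h1 h2 k1 k2 v1 v2 w1 w2 u :: "'a::field poly"
  assumes m: "m > 0"
    and gh: "g1 * h1 = xm1 m" "g2 * h2 = xm1 m"
    and k: "[subst_xinv m h1 = k1 * h1] (mod xm1 m)" "[subst_xinv m h2 = k2 * h2] (mod xm1 m)"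
    and w: "[subst_xinv m v1 = w1] (mod xm1 m)" "[subst_xinv m v2 = w2] (mod xm1 m)"
    and u: "[u * (1 - v1 * v2) = 1] (mod xm1 m)"
  shows "euclid_dual (2 * m) (qc_code m g1 (v1 * g1) (v2 * g2) g2)
    = qc_code m h1 (- w2 * h1) (- w1 * h2) h2"
proof
  have "[subst_xinv m w = v] (mod xm1 m)" if "[subst_xinv m v = w] (mod xm1 m)" for v w :: "'a poly"
    using cong_subst_xinv[OF that] subst_xinv_subst_xinv[OF m, of v] by (blast intro: cong_trans cong_sym)
  with w show "qc_code m h1 (- w2 * h1) (- w1 * h2) h2 \<subseteq> euclid_dual (2 * m) (qc_code m g1 (v1 * g1) (v2 * g2) g2)"
    by (intro qc_code_subset_euclid_dual m xm1_dvd_mult_subst_xinv[OF gh(1) k(1)]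
        xm1_dvd_mult_subst_xinv[OF gh(2) k(2)])
qed (rule euclid_dual_subset_qc_code[OF m gh k w u])

theorem mainTheorem14:
  fixes v1 v2 :: "'a::{field_gcd,finite} poly"
    and p t r1 r2 :: nat
  assumes "CHAR('a) = p"
    and "t \<ge> 1"
    and "gcd ((v1 * v2 - 1) mod xm1 (p ^ t)) (xm1 (p ^ t)) = 1"
    and "0 < r1" and "r1 < r2" and "real r2 < (real (p ^ t) - 1) / 2"
  shows "euclid_dual (2 * p ^ t)
           (qc_code (p ^ t) ([:-1, 1:] ^ r1) (v1 * [:-1, 1:] ^ r1)
                            (v2 * [:-1, 1:] ^ r2) ([:-1, 1:] ^ r2))
         = qc_code (p ^ t) ([:-1, 1:] ^ (p ^ t - r1))
                           (- pconj (p ^ t) v2 * [:-1, 1:] ^ (p ^ t - r1))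
                           (- pconj (p ^ t) v1 * [:-1, 1:] ^ (p ^ t - r2))
                           ([:-1, 1:] ^ (p ^ t - r2))
       \<and> euclid_dual (2 * p ^ t)
           (qc_code (p ^ t) ([:-1, 1:] ^ r1) (v1 * [:-1, 1:] ^ r1)
                            (v2 * [:-1, 1:] ^ r2) ([:-1, 1:] ^ r2))
         \<subseteq> qc_code (p ^ t) ([:-1, 1:] ^ r1) (v1 * [:-1, 1:] ^ r1)
                            (v2 * [:-1, 1:] ^ r2) ([:-1, 1:] ^ r2)"
proof -
  define m where "m = p ^ t"
  let ?L = "[:-1, 1:] :: 'a poly"
  have "prime p"
    unfolding assms(1)[symmetric] by (rule prime_CHAR_semidom, rule finite_imp_CHAR_pos) simp
  then have m: "m > 0"
    by (simp add: m_def prime_gt_0_nat)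
  have "2 * real r2 + 1 < real m"
    using assms(6) unfolding m_def by (simp add: field_simps)
  then have "2 * r2 < m"
    by linarith
  then have r: "r1 \<le> r2" "r2 \<le> m - r2"
    using assms(5) by simp_all
  have gh: "?L ^ r * ?L ^ (m - r) = xm1 m" if "r \<le> m" for r
    using that x_minus_1_power_CHAR_power[OF \<open>prime p\<close>[folded assms(1)], of t]
    by (simp add: m_def assms(1) flip: power_add)
  obtain u' where "[u' * (v1 * v2 - 1) = 1] (mod xm1 m)"
    using assms(3) unfolding m_def[symmetric] by (rule cong_inverse_of_gcd_mod_eq_1[OF xm1_neq_0[OF m]])
  then have u: "[- u' * (1 - v1 * v2) = 1] (mod xm1 m)"
    by (simp add: algebra_simps)
  have dual: "euclid_dual (2 * m) (qc_code m (?L ^ r1) (v1 * ?L ^ r1) (v2 * ?L ^ r2) (?L ^ r2))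
    = qc_code m (?L ^ (m - r1)) (- pconj m v2 * ?L ^ (m - r1)) (- pconj m v1 * ?L ^ (m - r2)) (?L ^ (m - r2))"
    using r by (intro euclid_dual_qc_code[OF m _ _ subst_xinv_x_minus_1_power[OF m] subst_xinv_x_minus_1_power[OF m]
          pconj_cong_subst_xinv[OF m, THEN cong_sym] pconj_cong_subst_xinv[OF m, THEN cong_sym] u] gh) simp_all
  have "qc_code m (?L ^ (m - r1)) (- pconj m v2 * ?L ^ (m - r1)) (- pconj m v1 * ?L ^ (m - r2)) (?L ^ (m - r2))
    \<subseteq> qc_code m (?L ^ r1) (v1 * ?L ^ r1) (v2 * ?L ^ r2) (?L ^ r2)"
    using r by (intro qc_code_subset_qc_code[OF u] le_imp_power_dvd) simp_all
  with dual show ?thesis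
    by (simp add: m_def)
qed

end
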